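(* For all $t>0$, writing $u(0+,t)=\lim_{x\searrow0}u(x,t)$: (1) if $F(0,t)<G(0,t)$, then $u(0+,t)<0$; (2) if $u(0+,t)<0$, then $F(0,t)\le G(0,t)$.
   Context: Standing assumptions: $u_0,u_b:[0,\infty)\to\mathbb{R}$ bounded measurable with $u_b>0$; $\rho_0,\rho_b:[0,\infty)\to(0,\infty)$ positive locally bounded measurable. For $x,t,y,\tau\ge0$: $F(y,x,t)=\int_0^y[tu_0(\eta)+\eta-x]\rho_0(\eta)\,d\eta$, $G(\tau,x,t)=\int_0^\tau[x-u_b(\eta)(t-\eta)]\rho_b(\eta)u_b(\eta)\,d\eta$, $F(x,t)=\min_{y\ge0}F(y,x,t)$, $G(x,t)=\min_{\tau\ge0}G(\tau,x,t)$ (minima attained); $y_*\le y^*$ smallest/largest minimizers of $F(\cdot,x,t)$, $\tau_*\le\tau^*$ those of $G(\cdot,x,t)$. Definition of $u$: for $x,t>0$: (a) if $F(x,t)<G(x,t)$, $y_*=y^*$: $u=\frac{x-y_*}{t}$; (b) if $F<G$, $y_*<y^*$: $u=\frac{\int_{y_*}^{y^*}\rho_0u_0}{\int_{y_*}^{y^*}\rho_0}$; (c) if $F>G$, $\tau_*=\tau^*$: $u=\frac{x}{t-\tau_*}$; (d) if $F>G$, $\tau_*<\tau^*$: $u=\frac{\int_{\tau_*}^{\tau^*}\rho_bu_b^2}{\int_{\tau_*}^{\tau^*}\rho_bu_b}$; (e) if $F=G$ and ($y^*\ne0$ or $\tau^*\ne0$): $u=\frac{\int_0^{\tau^*}\rho_bu_b^2+\int_0^{y^*}\rho_0u_0}{\int_0^{\tau^*}\rho_bu_b+\int_0^{y^*}\rho_0}$;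 (f) if $F=G$, $y^*=\tau^*=0$: $u=x/t$. For $x=0$: $u(0,t)=u_b(t)$ if $F(0,t)>G(0,t)$, $0$ if $F(0,t)<G(0,t)$, formula (e) with $x=0$ if $F(0,t)=G(0,t)$. *)

theory Defs
  imports "HOL-Analysis.Analysis"
begin

text \<open>Data: u0, ub, rho0, rhob :: real => real, only their values on [0,inf) matter.\<close>

definition Fy :: "(real \<Rightarrow> real) \<Rightarrow> (real \<Rightarrow> real) \<Rightarrow> real \<Rightarrow> real \<Rightarrow> real \<Rightarrow> real" where
  "Fy u0 \<rho>0 y x t = (LINT \<eta>:{0..y}|lborel. (t * u0 \<eta> + \<eta> - x) * \<rho>0 \<eta>)"

definition G\<tau> :: "(real \<Rightarrow> real) \<Rightarrow> (real \<Rightarrow> real) \<Rightarrow> real \<Rightarrow> real \<Rightarrow> real \<Rightarrow> real" where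
  "G\<tau> ub \<rho>b \<tau> x t = (LINT \<eta>:{0..\<tau>}|lborel. (x - ub \<eta> * (t - \<eta>)) * \<rho>b \<eta> * ub \<eta>)"

definition Fmin :: "(real \<Rightarrow> real) \<Rightarrow> (real \<Rightarrow> real) \<Rightarrow> real \<Rightarrow> real \<Rightarrow> real" where
  "Fmin u0 \<rho>0 x t = Inf ((\<lambda>y. Fy u0 \<rho>0 y x t) ` {0..})"

definition Gmin :: "(real \<Rightarrow> real) \<Rightarrow> (real \<Rightarrow> real) \<Rightarrow> real \<Rightarrow> real \<Rightarrow> real" where
  "Gmin ub \<rho>b x t = Inf ((\<lambda>\<tau>. G\<tau> ub \<rho>b \<tau> x t) ` {0..})"

definition Fargmin :: "(real \<Rightarrow> real) \<Rightarrow> (real \<Rightarrow> real) \<Rightarrow> real \<Rightarrow> real \<Rightarrow> real set" where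
  "Fargmin u0 \<rho>0 x t = {y. 0 \<le> y \<and> (\<forall>y'\<ge>0. Fy u0 \<rho>0 y x t \<le> Fy u0 \<rho>0 y' x t)}"

definition Gargmin :: "(real \<Rightarrow> real) \<Rightarrow> (real \<Rightarrow> real) \<Rightarrow> real \<Rightarrow> real \<Rightarrow> real set" where
  "Gargmin ub \<rho>b x t = {\<tau>. 0 \<le> \<tau> \<and> (\<forall>\<tau>'\<ge>0. G\<tau> ub \<rho>b \<tau> x t \<le> G\<tau> ub \<rho>b \<tau>' x t)}"

definition ylo where "ylo u0 \<rho>0 x t = Inf (Fargmin u0 \<rho>0 x t)"
definition yup where "yup u0 \<rho>0 x t = Sup (Fargmin u0 \<rho>0 x t)"
definition tlo where "tlo ub \<rho>b x t = Inf (Gargmin ub \<rho>b x t)"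
definition tup where "tup ub \<rho>b x t = Sup (Gargmin ub \<rho>b x t)"

definition u_e :: "(real \<Rightarrow> real) \<Rightarrow> (real \<Rightarrow> real) \<Rightarrow> (real \<Rightarrow> real) \<Rightarrow> (real \<Rightarrow> real) \<Rightarrow> real \<Rightarrow> real \<Rightarrow> real" where
  "u_e u0 \<rho>0 ub \<rho>b x t =
     ((LINT \<eta>:{0..tup ub \<rho>b x t}|lborel. \<rho>b \<eta> * (ub \<eta>)\<^sup>2) + (LINT \<eta>:{0..yup u0 \<rho>0 x t}|lborel. \<rho>0 \<eta> * u0 \<eta>))
     / ((LINT \<eta>:{0..tup ub \<rho>b x t}|lborel. \<rho>b \<eta> * ub \<eta>) + (LINT \<eta>:{0..yup u0 \<rho>0 x t}|lborel. \<rho>0 \<eta>))"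

definition usol :: "(real \<Rightarrow> real) \<Rightarrow> (real \<Rightarrow> real) \<Rightarrow> (real \<Rightarrow> real) \<Rightarrow> (real \<Rightarrow> real) \<Rightarrow> real \<Rightarrow> real \<Rightarrow> real" where
  "usol u0 \<rho>0 ub \<rho>b x t =
    (let F = Fmin u0 \<rho>0 x t; G = Gmin ub \<rho>b x t;
         y1 = ylo u0 \<rho>0 x t; y2 = yup u0 \<rho>0 x t;
         t1 = tlo ub \<rho>b x t; t2 = tup ub \<rho>b x t in
     if x = 0 then
       (if F > G then ub t else if F < G then 0 else u_e u0 \<rho>0 ub \<rho>b x t)
     else if F < G then
       (if y1 = y2 then (x - y1) / t
        else (LINT \<eta>:{y1..y2}|lborel. \<rho>0 \<eta> * u0 \<eta>) / (LINT \<eta>:{y1..y2}|lborel. \<rho>0 \<eta>))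
     else if F > G then
       (if t1 = t2 then x / (t - t1)
        else (LINT \<eta>:{t1..t2}|lborel. \<rho>b \<eta> * (ub \<eta>)\<^sup>2) / (LINT \<eta>:{t1..t2}|lborel. \<rho>b \<eta> * ub \<eta>))
     else
       (if y2 \<noteq> 0 \<or> t2 \<noteq> 0 then u_e u0 \<rho>0 ub \<rho>b x t else x / t))"

end

theory Submission
  imports Defs
begin

text \<open>Both functionals are affine in x: F(y,x,t) = F(y,0,t) - x m0(y) and
  G(\<tau>,x,t) = G(\<tau>,0,t) + x mb(\<tau>), where m0(y), the integral of \<rho>0 over [0,y], is
  strictly increasing and mb \<ge> 0. Hence F(x,t) decreases and G(x,t) increases in x, and the
  minimizers of F(.,x,t) move to the right as x grows.

  If F(0,t) < G(0,t) \<le> G(0,0,t) = 0, the largest minimizer y0 of F(.,0,t) is positive and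
  F < G persists for all x > 0, where u(x,t) is squeezed between (x - y_up)/t and (x - y_lo)/t.
  Both extreme minimizers tend to y0 as x decreases to 0, so u(0+,t) = -y0/t < 0.

  If F(0,t) > G(0,t), the same affine bounds give F > G for small x > 0. There u is given by
  the boundary formulas, and it is positive because every minimizer of G(.,x,t) lies below t.
  Hence a limit u(0+,t) cannot be negative.\<close>

definition locally_bounded_measurable :: "(real \<Rightarrow> real) \<Rightarrow> bool" where
  "locally_bounded_measurable f \<longleftrightarrow>
     set_borel_measurable borel {0..} f \<and> (\<forall>M. \<exists>B. \<forall>x\<in>{0..M}. \<bar>f x\<bar> \<le> B)"

lemma locally_bounded_measurable_const: "locally_bounded_measurable (\<lambda>_. c)"
  unfolding locally_bounded_measurable_def set_borel_measurable_def by auto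

lemma locally_bounded_measurable_ident: "locally_bounded_measurable (\<lambda>x. x)"
  unfolding locally_bounded_measurable_def set_borel_measurable_def
proof
  show "(\<lambda>x::real. indicator {0..} x *\<^sub>R x) \<in> borel_measurable borel"
    by measurable
  show "\<forall>M::real. \<exists>B. \<forall>x\<in>{0..M}. \<bar>x\<bar> \<le> B"
    by (auto intro!: exI)
qed

lemma locally_bounded_measurable_add:
  assumes f: "locally_bounded_measurable f" and g: "locally_bounded_measurable g"
  shows "locally_bounded_measurable (\<lambda>x. f x + g x)"
  unfolding locally_bounded_measurable_def
proof
  have "(\<lambda>x. indicator {0..} x *\<^sub>R (f x + g x)) =
        (\<lambda>x. indicator {0..} x *\<^sub>R f x + indicator {0..} x *\<^sub>R g x)"
    by (simp add: distrib_left)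
  then show "set_borel_measurable borel {0..} (\<lambda>x. f x + g x)"
    using f g unfolding locally_bounded_measurable_def set_borel_measurable_def
    by (simp only:) (intro borel_measurable_add; blast)
  show "\<forall>M. \<exists>B. \<forall>x\<in>{0..M}. \<bar>f x + g x\<bar> \<le> B"
  proof
    fix M :: real
    obtain Bf Bg where "\<forall>x\<in>{0..M}. \<bar>f x\<bar> \<le> Bf" "\<forall>x\<in>{0..M}. \<bar>g x\<bar> \<le> Bg"
      using f g unfolding locally_bounded_measurable_def by meson
    then show "\<exists>B. \<forall>x\<in>{0..M}. \<bar>f x + g x\<bar> \<le> B"
      by (intro exI[of _ "Bf + Bg"]) (auto intro: abs_triangle_ineq[THEN order_trans] add_mono)
  qed
qed

lemma locally_bounded_measurable_mult:
  assumes f: "locally_bounded_measurable f" and g: "locally_bounded_measurable g"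
  shows "locally_bounded_measurable (\<lambda>x. f x * g x)"
  unfolding locally_bounded_measurable_def
proof
  have "(\<lambda>x. indicator {0..} x *\<^sub>R (f x * g x)) =
        (\<lambda>x. (indicator {0..} x *\<^sub>R f x) * (indicator {0..} x *\<^sub>R g x))"
    by (auto split: split_indicator)
  then show "set_borel_measurable borel {0..} (\<lambda>x. f x * g x)"
    using f g unfolding locally_bounded_measurable_def set_borel_measurable_def
    by (simp only:) (intro borel_measurable_times; blast)
  show "\<forall>M. \<exists>B. \<forall>x\<in>{0..M}. \<bar>f x * g x\<bar> \<le> B"
  proof
    fix M :: real
    obtain Bf Bg where "\<forall>x\<in>{0..M}. \<bar>f x\<bar> \<le> Bf" "\<forall>x\<in>{0..M}. \<bar>g x\<bar> \<le> Bg"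
      using f g unfolding locally_bounded_measurable_def by meson
    then show "\<exists>B. \<forall>x\<in>{0..M}. \<bar>f x * g x\<bar> \<le> B"
      by (intro exI[of _ "\<bar>Bf\<bar> * \<bar>Bg\<bar>"]) (auto simp: abs_mult intro!: mult_mono)
  qed
qed

lemma locally_bounded_measurable_diff:
  assumes "locally_bounded_measurable f" "locally_bounded_measurable g"
  shows "locally_bounded_measurable (\<lambda>x. f x - g x)"
  using locally_bounded_measurable_add[OF assms(1)
      locally_bounded_measurable_mult[OF locally_bounded_measurable_const[of "-1"] assms(2)]]
  by simp

lemmas locally_bounded_measurable_intros =
  locally_bounded_measurable_const locally_bounded_measurable_ident locally_bounded_measurable_add
  locally_bounded_measurable_mult locally_bounded_measurable_diff

lemma set_integrable_interval_if_bounded: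
  fixes h :: "real \<Rightarrow> real"
  assumes "set_borel_measurable borel S h" "{a..b} \<subseteq> S"
    and "\<forall>x\<in>{a..b}. \<bar>h x\<bar> \<le> B"
  shows "set_integrable lborel {a..b} h"
proof -
  let ?g = "\<lambda>x. indicator {a..b} x *\<^sub>R h x"
  have "set_borel_measurable borel {a..b} h"
    by (rule set_borel_measurable_subset[OF assms(1) _ assms(2)]) simp
  moreover have "emeasure lborel {a..b} < \<infinity>"
    by (cases "a \<le> b") auto
  ultimately have "integrable lborel (\<lambda>x. indicator {a..b} x *\<^sub>R ?g x)"
    using assms(3) unfolding set_borel_measurable_def
    by (intro integrableI_bounded_set_indicator[where B=B]) (auto split: split_indicator)
  moreover have "(\<lambda>x. indicator {a..b} x *\<^sub>R ?g x) = ?g"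
    by (auto split: split_indicator)
  ultimately show ?thesis
    unfolding set_integrable_def by simp
qed

lemma set_integral_interval_pos:
  fixes h :: "real \<Rightarrow> real"
  assumes h: "set_integrable lborel {a..b} h" and "a < b" and pos: "\<forall>x\<in>{a..b}. 0 < h x"
  shows "0 < (LINT x:{a..b}|lborel. h x)"
proof -
  let ?g = "\<lambda>x. indicator {a..b} x *\<^sub>R h x"
  have nonneg: "AE x in lborel. 0 \<le> ?g x"
    using pos by (auto split: split_indicator intro!: less_imp_le)
  have "integral\<^sup>L lborel ?g \<noteq> 0"
  proof
    assume "integral\<^sup>L lborel ?g = 0"
    then have "AE x in lborel. ?g x = 0"
      using integral_nonneg_eq_0_iff_AE h nonneg unfolding set_integrable_def by blast
    then have "AE x in lborel. x \<notin> {a..b}"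
      by eventually_elim (use pos in \<open>fastforce split: split_indicator\<close>)
    moreover have "{x \<in> space lborel. \<not> x \<notin> {a..b}} = {a..b}"
      by auto
    ultimately have "emeasure lborel {a..b} = 0"
      using AE_iff_measurable[of "{a..b}" lborel "\<lambda>x. x \<notin> {a..b}"] by simp
    with \<open>a < b\<close> show False by simp
  qed
  moreover have "0 \<le> integral\<^sup>L lborel ?g"
    using nonneg by (rule integral_nonneg_AE)
  ultimately show ?thesis
    unfolding set_lebesgue_integral_def by simp
qed

lemma locally_bounded_measurable_set_integrable:
  assumes "locally_bounded_measurable f" "0 \<le> a"
  shows "set_integrable lborel {a..b} f"
proof -
  obtain B where "\<forall>x\<in>{0..b}. \<bar>f x\<bar> \<le> B"
    using assms(1) unfolding locally_bounded_measurable_def by blast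
  with assms show ?thesis
    unfolding locally_bounded_measurable_def
    by (intro set_integrable_interval_if_bounded[where S="{0..}" and B=B]) auto
qed

lemma locally_bounded_measurable_integrable:
  assumes "locally_bounded_measurable f" "0 \<le> a"
  shows "f integrable_on {a..b}" "(LINT x:{a..b}|lborel. f x) = integral {a..b} f"
  using set_borel_integral_eq_integral[OF locally_bounded_measurable_set_integrable[OF assms]] by auto

lemma locally_bounded_measurable_integral_pos:
  assumes "locally_bounded_measurable f" "0 \<le> a" "a < b" "\<forall>x\<in>{a..b}. 0 < f x"
  shows "0 < integral {a..b} f"
  using set_integral_interval_pos[OF locally_bounded_measurable_set_integrable[OF assms(1,2)] assms(3,4)]
  unfolding locally_bounded_measurable_integrable(2)[OF assms(1,2)] .

lemma locally_bounded_measurable_integral_combine: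
  assumes "locally_bounded_measurable f" "0 \<le> a" "a \<le> b"
  shows "integral {0..b} f = integral {0..a} f + integral {a..b} f"
  using Henstock_Kurzweil_Integration.integral_combine[OF assms(2,3)
      locally_bounded_measurable_integrable(1)[OF assms(1) order_refl]]
  by simp

lemma integral_weighted_bounds:
  fixes g w :: "real \<Rightarrow> real"
  assumes w: "w integrable_on {a..b}" and gw: "(\<lambda>x. g x * w x) integrable_on {a..b}"
    and bounds: "\<forall>x\<in>{a..b}. 0 \<le> w x \<and> lo \<le> g x \<and> g x \<le> hi"
  shows "lo * integral {a..b} w \<le> integral {a..b} (\<lambda>x. g x * w x)"
    and "integral {a..b} (\<lambda>x. g x * w x) \<le> hi * integral {a..b} w"
proof -
  have "integral {a..b} (\<lambda>x. lo * w x) \<le> integral {a..b} (\<lambda>x. g x * w x)"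
    using w gw bounds by (intro integral_le integrable_on_mult_right) (auto intro: mult_right_mono)
  then show "lo * integral {a..b} w \<le> integral {a..b} (\<lambda>x. g x * w x)"
    by simp
  have "integral {a..b} (\<lambda>x. g x * w x) \<le> integral {a..b} (\<lambda>x. hi * w x)"
    using w gw bounds by (intro integral_le integrable_on_mult_right) (auto intro: mult_right_mono)
  then show "integral {a..b} (\<lambda>x. g x * w x) \<le> hi * integral {a..b} w"
    by simp
qed

lemma eventually_at_right_0_less_1: "eventually (\<lambda>x::real. 0 < x \<and> x < 1) (at_right 0)"
  using eventually_at_right_less order_tendstoD(2)[OF tendsto_ident_at zero_less_one]
  by (rule eventually_conj)

locale half_line_data =
  fixes u0 ub \<rho>0 \<rho>b :: "real \<Rightarrow> real" and t :: real
  assumes u0_meas: "set_borel_measurable borel {0..} u0"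
      and ub_meas: "set_borel_measurable borel {0..} ub"
      and r0_meas: "set_borel_measurable borel {0..} \<rho>0"
      and rb_meas: "set_borel_measurable borel {0..} \<rho>b"
      and u0_bdd: "\<exists>B. \<forall>x\<ge>0. \<bar>u0 x\<bar> \<le> B"
      and ub_bdd: "\<exists>B. \<forall>x\<ge>0. \<bar>ub x\<bar> \<le> B"
      and ub_pos: "\<forall>x\<ge>0. ub x > 0"
      and r0_pos: "\<forall>x\<ge>0. \<rho>0 x > 0"
      and rb_pos: "\<forall>x\<ge>0. \<rho>b x > 0"
      and r0_locbdd: "\<forall>M. \<exists>B. \<forall>x\<in>{0..M}. \<rho>0 x \<le> B"
      and rb_locbdd: "\<forall>M. \<exists>B. \<forall>x\<in>{0..M}. \<rho>b x \<le> B"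
      and F_att: "\<forall>x\<ge>0. \<forall>s\<ge>0. \<exists>a b. a \<in> Fargmin u0 \<rho>0 x s \<and> b \<in> Fargmin u0 \<rho>0 x s
                    \<and> Fargmin u0 \<rho>0 x s \<subseteq> {a..b}"
      and G_att: "\<forall>x\<ge>0. \<forall>s\<ge>0. \<exists>a b. a \<in> Gargmin ub \<rho>b x s \<and> b \<in> Gargmin ub \<rho>b x s
                    \<and> Gargmin ub \<rho>b x s \<subseteq> {a..b}"
      and t_pos: "t > 0"
begin

abbreviation "F y x \<equiv> Fy u0 \<rho>0 y x t"
abbreviation "G \<tau> x \<equiv> G\<tau> ub \<rho>b \<tau> x t"
abbreviation "F_integrand x \<equiv> \<lambda>\<eta>. (t * u0 \<eta> + \<eta> - x) * \<rho>0 \<eta>"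
abbreviation "G_integrand x \<equiv> \<lambda>\<eta>. (x - ub \<eta> * (t - \<eta>)) * \<rho>b \<eta> * ub \<eta>"
abbreviation "Fm x \<equiv> Fmin u0 \<rho>0 x t"
abbreviation "Gm x \<equiv> Gmin ub \<rho>b x t"
abbreviation "Fargs x \<equiv> Fargmin u0 \<rho>0 x t"
abbreviation "Gargs x \<equiv> Gargmin ub \<rho>b x t"
abbreviation "y_lo x \<equiv> ylo u0 \<rho>0 x t"
abbreviation "y_up x \<equiv> yup u0 \<rho>0 x t"
abbreviation "\<tau>_lo x \<equiv> tlo ub \<rho>b x t"
abbreviation "\<tau>_up x \<equiv> tup ub \<rho>b x t"
abbreviation "u x \<equiv> usol u0 \<rho>0 ub \<rho>b x t"
abbreviation m0 :: "real \<Rightarrow> real" where "m0 y \<equiv> integral {0..y} \<rho>0"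
abbreviation mb :: "real \<Rightarrow> real" where "mb \<tau> \<equiv> integral {0..\<tau>} (\<lambda>\<eta>. \<rho>b \<eta> * ub \<eta>)"

lemma data_locally_bounded_measurable:
  "locally_bounded_measurable u0" "locally_bounded_measurable ub"
  "locally_bounded_measurable \<rho>0" "locally_bounded_measurable \<rho>b"
proof -
  show "locally_bounded_measurable u0" "locally_bounded_measurable ub"
    using u0_meas ub_meas u0_bdd ub_bdd unfolding locally_bounded_measurable_def
    by (meson atLeastAtMost_iff)+
  have "\<forall>M. \<exists>B. \<forall>x\<in>{0..M}. \<bar>\<rho> x\<bar> \<le> B"
    if "\<forall>x\<ge>0. \<rho> x > 0" "\<forall>M. \<exists>B. \<forall>x\<in>{0..M}. \<rho> x \<le> B" for \<rho> :: "real \<Rightarrow> real"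
    using that by (metis abs_of_pos atLeastAtMost_iff)
  then show "locally_bounded_measurable \<rho>0" "locally_bounded_measurable \<rho>b"
    using r0_meas rb_meas r0_pos rb_pos r0_locbdd rb_locbdd
    unfolding locally_bounded_measurable_def by blast+
qed

lemmas locally_bounded_measurable_data_intros =
  locally_bounded_measurable_intros data_locally_bounded_measurable

lemma F_eq_integral: "F y x = integral {0..y} (F_integrand x)"
  unfolding Fy_def
  by (intro locally_bounded_measurable_integrable(2) locally_bounded_measurable_data_intros) simp

lemma G_eq_integral: "G \<tau> x = integral {0..\<tau>} (G_integrand x)"
  unfolding G\<tau>_def
  by (intro locally_bounded_measurable_integrable(2) locally_bounded_measurable_data_intros) simp

lemma F_at_zero: "F 0 x = 0"
  by (simp add: F_eq_integral)

lemma G_at_zero: "G 0 x = 0"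
  by (simp add: G_eq_integral)

lemma F_affine: "F y x = F y 0 - x * m0 y"
proof -
  have "F_integrand x = (\<lambda>\<eta>. F_integrand 0 \<eta> - x * \<rho>0 \<eta>)"
    by (auto simp: algebra_simps)
  then have "integral {0..y} (F_integrand x) =
             integral {0..y} (F_integrand 0) - integral {0..y} (\<lambda>\<eta>. x * \<rho>0 \<eta>)"
    by (simp only:) (intro integral_diff locally_bounded_measurable_integrable(1)
        locally_bounded_measurable_data_intros order_refl)+
  then show ?thesis
    by (simp add: F_eq_integral)
qed

lemma G_affine: "G \<tau> x = G \<tau> 0 + x * mb \<tau>"
proof -
  have "G_integrand x = (\<lambda>\<eta>. G_integrand 0 \<eta> + x * (\<rho>b \<eta> * ub \<eta>))"
    by (auto simp: algebra_simps)
  then have "integral {0..\<tau>} (G_integrand x) =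
             integral {0..\<tau>} (G_integrand 0) + integral {0..\<tau>} (\<lambda>\<eta>. x * (\<rho>b \<eta> * ub \<eta>))"
    by (simp only:) (intro integral_add locally_bounded_measurable_integrable(1)
        locally_bounded_measurable_data_intros order_refl)+
  then show ?thesis
    by (simp add: G_eq_integral)
qed

lemma m0_strict_mono: "0 \<le> a \<Longrightarrow> a < b \<Longrightarrow> m0 a < m0 b"
  using locally_bounded_measurable_integral_combine[OF data_locally_bounded_measurable(3), of a b]
    locally_bounded_measurable_integral_pos[OF data_locally_bounded_measurable(3), of a b] r0_pos
  by auto

lemma m0_mono: "0 \<le> a \<Longrightarrow> a \<le> b \<Longrightarrow> m0 a \<le> m0 b"
  using m0_strict_mono[of a b] by (cases "a = b") auto

lemma m0_nonneg: "0 \<le> m0 y"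
  using r0_pos by (intro integral_nonneg locally_bounded_measurable_integrable(1)
      data_locally_bounded_measurable order_refl) (auto intro: less_imp_le)

lemma mb_nonneg: "0 \<le> mb \<tau>"
  using rb_pos ub_pos by (intro integral_nonneg locally_bounded_measurable_integrable(1)
      locally_bounded_measurable_data_intros order_refl) (auto intro: less_imp_le)

lemma mem_Fargmin: "y \<in> Fargs x \<longleftrightarrow> 0 \<le> y \<and> (\<forall>y'\<ge>0. F y x \<le> F y' x)"
  unfolding Fargmin_def by simp

lemma mem_Gargmin: "\<tau> \<in> Gargs x \<longleftrightarrow> 0 \<le> \<tau> \<and> (\<forall>\<tau>'\<ge>0. G \<tau> x \<le> G \<tau>' x)"
  unfolding Gargmin_def by simp

lemma Fargmin_extremes:
  assumes "0 \<le> x"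
  shows "y_lo x \<in> Fargs x" "y_up x \<in> Fargs x" "Fargs x \<subseteq> {y_lo x..y_up x}"
proof -
  obtain a b where ab: "a \<in> Fargs x" "b \<in> Fargs x" "Fargs x \<subseteq> {a..b}"
    using F_att assms t_pos by (meson less_imp_le)
  have "y_lo x = a"
    unfolding ylo_def using ab by (intro cInf_eq_minimum) auto
  moreover have "y_up x = b"
    unfolding yup_def using ab by (intro cSup_eq_maximum) auto
  ultimately show "y_lo x \<in> Fargs x" "y_up x \<in> Fargs x" "Fargs x \<subseteq> {y_lo x..y_up x}"
    using ab by auto
qed

lemma Gargmin_extremes:
  assumes "0 \<le> x"
  shows "\<tau>_lo x \<in> Gargs x" "\<tau>_up x \<in> Gargs x" "Gargs x \<subseteq> {\<tau>_lo x..\<tau>_up x}"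
proof -
  obtain a b where ab: "a \<in> Gargs x" "b \<in> Gargs x" "Gargs x \<subseteq> {a..b}"
    using G_att assms t_pos by (meson less_imp_le)
  have "\<tau>_lo x = a"
    unfolding tlo_def using ab by (intro cInf_eq_minimum) auto
  moreover have "\<tau>_up x = b"
    unfolding tup_def using ab by (intro cSup_eq_maximum) auto
  ultimately show "\<tau>_lo x \<in> Gargs x" "\<tau>_up x \<in> Gargs x" "Gargs x \<subseteq> {\<tau>_lo x..\<tau>_up x}"
    using ab by auto
qed

lemma Fmin_eq: "y \<in> Fargs x \<Longrightarrow> Fm x = F y x"
  unfolding Fmin_def by (rule cInf_eq_minimum) (auto simp: mem_Fargmin)

lemma Gmin_eq: "\<tau> \<in> Gargs x \<Longrightarrow> Gm x = G \<tau> x"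
  unfolding Gmin_def by (rule cInf_eq_minimum) (auto simp: mem_Gargmin)

text \<open>The difference F(y,.) - F(y',.) changes by -(x' - x)(m0 y - m0 y') from x to x', which is
  negative when y' < y; then y minimal at x and y' minimal at x' are incompatible.\<close>
lemma Fargmin_mono:
  assumes "x < x'" "y \<in> Fargs x" "y' \<in> Fargs x'"
  shows "y \<le> y'"
proof (rule ccontr)
  assume "\<not> y \<le> y'"
  moreover have "0 \<le> y'"
    using assms(3) mem_Fargmin by blast
  ultimately have "0 < (x' - x) * (m0 y - m0 y')"
    using m0_strict_mono assms(1) by simp
  moreover have "F y x \<le> F y' x" "F y' x' \<le> F y x'"
    using assms(2,3) mem_Fargmin by auto
  ultimately show False
    using F_affine[of y x] F_affine[of y' x] F_affine[of y x'] F_affine[of y' x']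
    by (simp add: algebra_simps)
qed

lemma Fmin_antimono:
  assumes "0 \<le> x" "x \<le> x'"
  shows "Fm x' \<le> Fm x"
proof -
  have y: "y_lo x \<in> Fargs x" "y_lo x' \<in> Fargs x'"
    using Fargmin_extremes assms by auto
  have "Fm x' \<le> F (y_lo x) x'"
    using y mem_Fargmin Fmin_eq by auto
  also have "\<dots> \<le> F (y_lo x) x"
    using F_affine[of "y_lo x" x] F_affine[of "y_lo x" x'] mult_right_mono[OF assms(2) m0_nonneg[of "y_lo x"]]
    by linarith
  finally show ?thesis
    using Fmin_eq y by simp
qed

lemma Gmin_mono:
  assumes "0 \<le> x" "x \<le> x'"
  shows "Gm x \<le> Gm x'"
proof -
  have \<tau>: "\<tau>_lo x \<in> Gargs x" "\<tau>_lo x' \<in> Gargs x'"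
    using Gargmin_extremes assms by auto
  have "G (\<tau>_lo x') x \<le> G (\<tau>_lo x') x'"
    using G_affine[of "\<tau>_lo x'" x] G_affine[of "\<tau>_lo x'" x'] mb_nonneg[of "\<tau>_lo x'"] assms
    by (simp add: algebra_simps mult_right_mono)
  then show ?thesis
    using \<tau> mem_Gargmin Gmin_eq by (metis order_trans)
qed

lemma y_up_le_y_lo_1: "0 \<le> x \<Longrightarrow> x < 1 \<Longrightarrow> y_up x \<le> y_lo 1"
  using Fargmin_mono Fargmin_extremes by simp

lemma y_up_0_le_y_lo: "0 < x \<Longrightarrow> y_up 0 \<le> y_lo x"
  using Fargmin_mono Fargmin_extremes by simp

lemma Fmin_lower_bound:
  assumes "0 \<le> x" "x < 1"
  shows "Fm 0 - x * m0 (y_lo 1) \<le> Fm x"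
proof -
  have y: "y_lo x \<in> Fargs x" "y_lo x \<le> y_up x"
    using Fargmin_extremes[OF assms(1)] by auto
  then have "0 \<le> y_lo x"
    using mem_Fargmin by blast
  from y y_up_le_y_lo_1[OF assms] have "y_lo x \<le> y_lo 1"
    by simp
  have "Fm 0 \<le> F (y_lo x) 0"
    using Fargmin_extremes(1)[of 0] Fmin_eq mem_Fargmin \<open>0 \<le> y_lo x\<close> by fastforce
  moreover have "x * m0 (y_lo x) \<le> x * m0 (y_lo 1)"
    using m0_mono[of "y_lo x" "y_lo 1"] \<open>0 \<le> y_lo x\<close> \<open>y_lo x \<le> y_lo 1\<close> assms
    by (simp add: mult_left_mono)
  ultimately show ?thesis
    using Fmin_eq[OF y(1)] F_affine[of "y_lo x" x] by simp
qed

lemma Gmin_upper_bound: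
  assumes "0 \<le> x"
  shows "Gm x \<le> Gm 0 + x * mb (\<tau>_lo 0)"
proof -
  have \<tau>: "\<tau>_lo 0 \<in> Gargs 0" "\<tau>_lo x \<in> Gargs x"
    using Gargmin_extremes assms by auto
  then have "Gm x \<le> G (\<tau>_lo 0) x"
    using Gmin_eq mem_Gargmin by auto
  then show ?thesis
    using G_affine[of "\<tau>_lo 0" x] Gmin_eq[OF \<tau>(1)] by simp
qed

text \<open>Any y in [c, y_lo 1] with c > y_up 0 lies above all minimizers of F(., 0), and by compactness
  F(., 0) exceeds its minimum there by a fixed gap; perturbing x by less than gap / m0 (y_lo 1)
  cannot close it.\<close>
lemma y_up_eventually_less:
  assumes "y_up 0 < c"
  shows "eventually (\<lambda>x. y_up x < c) (at_right 0)"
proof (cases "y_lo 1 < c")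
  case True
  from eventually_at_right_0_less_1 show ?thesis
  proof eventually_elim
    case (elim x)
    then show "y_up x < c"
      using y_up_le_y_lo_1[of x] True by linarith
  qed
next
  case False
  define y0 Y where "y0 = y_up 0" and "Y = y_lo 1"
  have c: "y0 < c" "c \<le> Y"
    using assms False unfolding y0_def Y_def by auto
  have y0: "y0 \<in> Fargs 0" "Fargs 0 \<subseteq> {..y0}"
    using Fargmin_extremes[of 0] unfolding y0_def by auto
  then have "0 \<le> y0"
    using mem_Fargmin by blast
  have "continuous_on {0..Y} (\<lambda>y. F y 0)"
    unfolding F_eq_integral
    by (intro indefinite_integral_continuous_1 locally_bounded_measurable_integrable(1)
        locally_bounded_measurable_data_intros order_refl)
  then have "continuous_on {c..Y} (\<lambda>y. F y 0)"
    by (rule continuous_on_subset) (use c \<open>0 \<le> y0\<close> in auto)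
  then obtain z where z: "z \<in> {c..Y}" "\<forall>y\<in>{c..Y}. F z 0 \<le> F y 0"
    using continuous_attains_inf[of "{c..Y}" "\<lambda>y. F y 0"] c by auto
  have "F y0 0 < F z 0"
  proof -
    have "0 \<le> z" "z \<notin> Fargs 0"
      using z c \<open>0 \<le> y0\<close> y0(2) by auto
    moreover have "\<forall>y'\<ge>0. F y0 0 \<le> F y' 0"
      using y0(1) mem_Fargmin by blast
    ultimately show ?thesis
      unfolding mem_Fargmin by (metis order.trans order_less_le)
  qed
  moreover have "((\<lambda>x. x * m0 Y) \<longlongrightarrow> 0) (at_right 0)"
    by (auto intro!: tendsto_eq_intros)
  ultimately have "eventually (\<lambda>x. x * m0 Y < F z 0 - F y0 0) (at_right 0)"
    by (intro order_tendstoD(2)) auto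
  with eventually_at_right_0_less_1 show ?thesis
  proof eventually_elim
    case (elim x)
    show "y_up x < c"
    proof (rule ccontr)
      assume "\<not> y_up x < c"
      then have y: "c \<le> y_up x" "y_up x \<le> Y" "0 \<le> y_up x"
        using y_up_le_y_lo_1[of x] elim c \<open>0 \<le> y0\<close> unfolding Y_def by auto
      have "x * m0 (y_up x) \<le> x * m0 Y"
        using m0_mono[OF y(3,2)] elim by (simp add: mult_left_mono)
      then have "F z 0 - x * m0 Y \<le> F (y_up x) x"
        using z(2)[rule_format, of "y_up x"] y F_affine[of "y_up x" x] by simp
      also have "\<dots> \<le> F y0 x"
        using Fargmin_extremes(2)[of x] elim \<open>0 \<le> y0\<close> mem_Fargmin by auto
      also have "\<dots> \<le> F y0 0"
        using F_affine[of y0 x] m0_nonneg[of y0] elim by simp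
      finally show False
        using elim by simp
    qed
  qed
qed

lemma y_up_tendsto: "(y_up \<longlongrightarrow> y_up 0) (at_right 0)"
proof (rule order_tendstoI)
  fix c assume "c < y_up 0"
  show "eventually (\<lambda>x. c < y_up x) (at_right 0)"
    using eventually_at_right_less
  proof eventually_elim
    case (elim x)
    then have "y_lo x \<le> y_up x"
      using Fargmin_extremes[of x] by auto
    with elim \<open>c < y_up 0\<close> show "c < y_up x"
      using y_up_0_le_y_lo[of x] by linarith
  qed
qed (rule y_up_eventually_less)

lemma y_lo_tendsto: "(y_lo \<longlongrightarrow> y_up 0) (at_right 0)"
proof (rule tendsto_sandwich[OF _ _ tendsto_const y_up_tendsto])
  show "eventually (\<lambda>x. y_up 0 \<le> y_lo x) (at_right 0)"
    using eventually_at_right_less by eventually_elim (rule y_up_0_le_y_lo)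
  show "eventually (\<lambda>x. y_lo x \<le> y_up x) (at_right 0)"
    using eventually_at_right_less
  proof eventually_elim
    case (elim x)
    then show "y_lo x \<le> y_up x"
      using Fargmin_extremes[of x] by auto
  qed
qed

text \<open>Between two minimizers a \<le> b of F(., x) the increment of F(., x) vanishes, which balances
  t times the momentum of the initial data on [a, b] against the first moment of \<rho>0 about x.\<close>
lemma Fargmin_momentum_bounds:
  assumes a: "a \<in> Fargs x" and b: "b \<in> Fargs x" and "a \<le> b"
  shows "(x - b) * integral {a..b} \<rho>0 \<le> t * integral {a..b} (\<lambda>\<eta>. \<rho>0 \<eta> * u0 \<eta>)"
    and "t * integral {a..b} (\<lambda>\<eta>. \<rho>0 \<eta> * u0 \<eta>) \<le> (x - a) * integral {a..b} \<rho>0"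
proof -
  note lbm = locally_bounded_measurable_data_intros
  have "0 \<le> a"
    using a mem_Fargmin by blast
  have "F b x = F a x"
    using a b mem_Fargmin by (meson order_antisym)
  then have "integral {a..b} (F_integrand x) = 0"
    using locally_bounded_measurable_integral_combine[OF _ \<open>0 \<le> a\<close> \<open>a \<le> b\<close>, of "F_integrand x"]
    unfolding F_eq_integral by (simp add: lbm)
  moreover have "integral {a..b} (F_integrand x) =
      t * integral {a..b} (\<lambda>\<eta>. \<rho>0 \<eta> * u0 \<eta>) + integral {a..b} (\<lambda>\<eta>. (\<eta> - x) * \<rho>0 \<eta>)"
  proof -
    have "F_integrand x = (\<lambda>\<eta>. t * (\<rho>0 \<eta> * u0 \<eta>) + (\<eta> - x) * \<rho>0 \<eta>)"
      by (auto simp: algebra_simps)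
    then show ?thesis
      by (simp only:) (subst integral_add; simp add: locally_bounded_measurable_integrable(1)[OF _ \<open>0 \<le> a\<close>] lbm)
  qed
  ultimately have balance:
    "t * integral {a..b} (\<lambda>\<eta>. \<rho>0 \<eta> * u0 \<eta>) + integral {a..b} (\<lambda>\<eta>. (\<eta> - x) * \<rho>0 \<eta>) = 0"
    by simp
  have "\<rho>0 integrable_on {a..b}" "(\<lambda>\<eta>. (\<eta> - x) * \<rho>0 \<eta>) integrable_on {a..b}"
    by (intro locally_bounded_measurable_integrable(1)[OF _ \<open>0 \<le> a\<close>] lbm)+
  moreover have "\<forall>\<eta>\<in>{a..b}. 0 \<le> \<rho>0 \<eta> \<and> a - x \<le> \<eta> - x \<and> \<eta> - x \<le> b - x"
    using r0_pos \<open>0 \<le> a\<close> by (auto intro: less_imp_le)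
  ultimately have "(a - x) * integral {a..b} \<rho>0 \<le> integral {a..b} (\<lambda>\<eta>. (\<eta> - x) * \<rho>0 \<eta>)"
    "integral {a..b} (\<lambda>\<eta>. (\<eta> - x) * \<rho>0 \<eta>) \<le> (b - x) * integral {a..b} \<rho>0"
    by (rule integral_weighted_bounds)+
  with balance show "(x - b) * integral {a..b} \<rho>0 \<le> t * integral {a..b} (\<lambda>\<eta>. \<rho>0 \<eta> * u0 \<eta>)"
    and "t * integral {a..b} (\<lambda>\<eta>. \<rho>0 \<eta> * u0 \<eta>) \<le> (x - a) * integral {a..b} \<rho>0"
    by (simp_all add: algebra_simps)
qed

lemma usol_bounds_if_Fmin_less:
  assumes x: "0 < x" and FG: "Fm x < Gm x"
  shows "(x - y_up x) / t \<le> u x \<and> u x \<le> (x - y_lo x) / t"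
proof (cases "y_lo x = y_up x")
  case True
  then show ?thesis
    using x FG by (simp add: usol_def Let_def)
next
  case False
  define a b where "a = y_lo x" and "b = y_up x"
  have ab: "a \<in> Fargs x" "b \<in> Fargs x" "a < b"
    using Fargmin_extremes[of x] False x unfolding a_def b_def by force+
  then have "0 \<le> a"
    using mem_Fargmin by blast
  note lbm = locally_bounded_measurable_data_intros
  define P R where "P = integral {a..b} \<rho>0" and "R = integral {a..b} (\<lambda>\<eta>. \<rho>0 \<eta> * u0 \<eta>)"
  have "0 < P"
    unfolding P_def using r0_pos \<open>0 \<le> a\<close> ab(3)
    by (intro locally_bounded_measurable_integral_pos lbm) auto
  have u: "u x = R / P"
    using False x FG unfolding usol_def Let_def a_def b_def P_def R_def
    by (simp add: locally_bounded_measurable_integrable(2)[OF _ \<open>0 \<le> a\<close>[unfolded a_def]] lbm)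
  have "(x - b) * P \<le> t * R" "t * R \<le> (x - a) * P"
    unfolding P_def R_def using Fargmin_momentum_bounds ab by auto
  with \<open>0 < P\<close> t_pos show ?thesis
    unfolding u a_def[symmetric] b_def[symmetric] by (simp add: field_simps)
qed

lemma ub_times_remaining_time_less:
  assumes "0 < x"
  obtains \<tau>' where "0 \<le> \<tau>'" "\<tau>' < t" "\<And>\<eta>. \<tau>' \<le> \<eta> \<Longrightarrow> ub \<eta> * (t - \<eta>) < x"
proof -
  obtain B where B: "\<forall>\<eta>\<ge>0. \<bar>ub \<eta>\<bar> \<le> B"
    using ub_bdd by blast
  then have "0 < B"
    using ub_pos by (metis abs_of_pos order_less_le_trans order_refl)
  define \<tau>' where "\<tau>' = max 0 (t - x / (2 * B))"
  have "0 < x / (2 * B)"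
    using assms \<open>0 < B\<close> by simp
  then have "0 \<le> \<tau>'" "\<tau>' < t"
    unfolding \<tau>'_def using t_pos by auto
  moreover have "ub \<eta> * (t - \<eta>) < x" if "\<tau>' \<le> \<eta>" for \<eta>
  proof -
    have "0 < ub \<eta>" "ub \<eta> \<le> B"
      using \<open>0 \<le> \<tau>'\<close> that ub_pos B by (auto intro: abs_ge_self[THEN order_trans])
    have "ub \<eta> * (t - \<eta>) \<le> B * (x / (2 * B))"
    proof (cases "\<eta> \<le> t")
      case True
      moreover have "t - \<eta> \<le> x / (2 * B)"
        using that unfolding \<tau>'_def by simp
      ultimately show ?thesis
        using \<open>0 < ub \<eta>\<close> \<open>ub \<eta> \<le> B\<close> by (intro mult_mono) auto
    next
      case False
      then have "ub \<eta> * (t - \<eta>) \<le> 0"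
        using \<open>0 < ub \<eta>\<close> by (intro mult_nonneg_nonpos) auto
      also have "0 \<le> B * (x / (2 * B))"
        using assms \<open>0 < B\<close> by simp
      finally show ?thesis .
    qed
    also have "\<dots> < x"
      using assms \<open>0 < B\<close> by simp
    finally show ?thesis .
  qed
  ultimately show ?thesis
    using that by blast
qed

text \<open>Just below t the integrand of G(., x) is positive, so cutting it off lowers G(., x):
  a minimizer cannot lie at or beyond t.\<close>
lemma Gargmin_less_t:
  assumes x: "0 < x" and \<tau>: "\<tau> \<in> Gargs x"
  shows "\<tau> < t"
proof (rule ccontr)
  assume "\<not> \<tau> < t"
  obtain \<tau>' where \<tau>': "0 \<le> \<tau>'" "\<tau>' < t" and small: "\<And>\<eta>. \<tau>' \<le> \<eta> \<Longrightarrow> ub \<eta> * (t - \<eta>) < x"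
    using ub_times_remaining_time_less[OF x] by blast
  have "0 < G_integrand x \<eta>" if "\<eta> \<in> {\<tau>'..\<tau>}" for \<eta>
    using small[of \<eta>] that \<tau>'(1) ub_pos rb_pos by simp
  then have "0 < integral {\<tau>'..\<tau>} (G_integrand x)"
    using \<tau>' \<open>\<not> \<tau> < t\<close>
    by (intro locally_bounded_measurable_integral_pos locally_bounded_measurable_data_intros) auto
  moreover have "G \<tau> x = G \<tau>' x + integral {\<tau>'..\<tau>} (G_integrand x)"
    unfolding G_eq_integral using \<tau>' \<open>\<not> \<tau> < t\<close>
    by (intro locally_bounded_measurable_integral_combine locally_bounded_measurable_data_intros) auto
  moreover have "G \<tau> x \<le> G \<tau>' x"
    using \<tau> \<tau>'(1) mem_Gargmin by blast
  ultimately show False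
    by simp
qed

lemma usol_pos_if_Gmin_less:
  assumes x: "0 < x" and GF: "Gm x < Fm x"
  shows "0 < u x"
proof (cases "\<tau>_lo x = \<tau>_up x")
  case True
  then show ?thesis
    using Gargmin_less_t[OF x] Gargmin_extremes[of x] x GF by (simp add: usol_def Let_def)
next
  case False
  define a b where "a = \<tau>_lo x" and "b = \<tau>_up x"
  have "a \<in> Gargs x" "a < b"
    using Gargmin_extremes[of x] False x unfolding a_def b_def by force+
  then have "0 \<le> a"
    using mem_Gargmin by blast
  have sq: "locally_bounded_measurable (\<lambda>\<eta>. \<rho>b \<eta> * (ub \<eta>)\<^sup>2)"
    unfolding power2_eq_square by (intro locally_bounded_measurable_data_intros)
  have "0 < integral {a..b} (\<lambda>\<eta>. \<rho>b \<eta> * (ub \<eta>)\<^sup>2)"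
    using rb_pos ub_pos \<open>0 \<le> a\<close> \<open>a < b\<close> by (intro locally_bounded_measurable_integral_pos sq)
      (auto simp: power2_eq_square intro!: mult_pos_pos)
  moreover have "0 < integral {a..b} (\<lambda>\<eta>. \<rho>b \<eta> * ub \<eta>)"
    using rb_pos ub_pos \<open>0 \<le> a\<close> \<open>a < b\<close>
    by (intro locally_bounded_measurable_integral_pos locally_bounded_measurable_data_intros) auto
  ultimately show ?thesis
    using False x GF unfolding usol_def Let_def a_def b_def
    by (simp add: locally_bounded_measurable_integrable(2)[OF _ \<open>0 \<le> a\<close>[unfolded a_def]] sq
        locally_bounded_measurable_data_intros)
qed

lemma y_up_0_pos:
  assumes "Fm 0 < Gm 0"
  shows "0 < y_up 0"
proof -
  have \<tau>: "\<tau>_lo 0 \<in> Gargs 0"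
    by (rule Gargmin_extremes(1)) simp
  have y: "y_up 0 \<in> Fargs 0"
    by (rule Fargmin_extremes(2)) simp
  have "Gm 0 = G (\<tau>_lo 0) 0"
    using \<tau> by (rule Gmin_eq)
  also have "\<dots> \<le> G 0 0"
    using \<tau> unfolding mem_Gargmin by simp
  finally have "F (y_up 0) 0 < F 0 0"
    using assms Fmin_eq[OF y] by (simp add: F_at_zero G_at_zero)
  moreover have "0 \<le> y_up 0"
    using y mem_Fargmin by blast
  ultimately show ?thesis
    by (cases "y_up 0 = 0") auto
qed

lemma usol_tendsto_if_Fmin_less:
  assumes FG: "Fm 0 < Gm 0"
  shows "(u \<longlongrightarrow> - y_up 0 / t) (at_right 0)"
proof -
  have bounds: "eventually (\<lambda>x. (x - y_up x) / t \<le> u x \<and> u x \<le> (x - y_lo x) / t) (at_right 0)"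
    using eventually_at_right_less
  proof eventually_elim
    case (elim x)
    then have "Fm x < Gm x"
      using Fmin_antimono[of 0 x] Gmin_mono[of 0 x] FG by simp
    with elim show ?case
      by (rule usol_bounds_if_Fmin_less)
  qed
  have "((\<lambda>x. (x - y_up x) / t) \<longlongrightarrow> (0 - y_up 0) / t) (at_right 0)"
    by (intro tendsto_divide tendsto_diff tendsto_ident_at tendsto_const y_up_tendsto)
      (use t_pos in simp)
  moreover have "((\<lambda>x. (x - y_lo x) / t) \<longlongrightarrow> (0 - y_up 0) / t) (at_right 0)"
    by (intro tendsto_divide tendsto_diff tendsto_ident_at tendsto_const y_lo_tendsto)
      (use t_pos in simp)
  moreover have "eventually (\<lambda>x. (x - y_up x) / t \<le> u x) (at_right 0)"
    using bounds by eventually_elim simp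
  moreover have "eventually (\<lambda>x. u x \<le> (x - y_lo x) / t) (at_right 0)"
    using bounds by eventually_elim simp
  ultimately have "(u \<longlongrightarrow> (0 - y_up 0) / t) (at_right 0)"
    by (rule tendsto_sandwich[rotated 2])
  then show ?thesis
    by simp
qed

lemma Gmin_less_Fmin_eventually:
  assumes "Gm 0 < Fm 0"
  shows "eventually (\<lambda>x. Gm x < Fm x) (at_right 0)"
proof -
  define K where "K = m0 (y_lo 1) + mb (\<tau>_lo 0)"
  have "((\<lambda>x. Gm 0 - Fm 0 + x * K) \<longlongrightarrow> Gm 0 - Fm 0) (at_right 0)"
    by (auto intro!: tendsto_eq_intros)
  then have "eventually (\<lambda>x. Gm 0 - Fm 0 + x * K < 0) (at_right 0)"
    using assms by (intro order_tendstoD(2)) auto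
  with eventually_at_right_0_less_1 show ?thesis
  proof eventually_elim
    case (elim x)
    then show "Gm x < Fm x"
      using Fmin_lower_bound[of x] Gmin_upper_bound[of x] unfolding K_def
      by (simp add: algebra_simps)
  qed
qed

lemma Fmin_le_Gmin_if_usol_limit_neg:
  assumes "(u \<longlongrightarrow> L) (at_right 0)" "L < 0"
  shows "Fm 0 \<le> Gm 0"
proof (rule ccontr)
  assume "\<not> Fm 0 \<le> Gm 0"
  then have "eventually (\<lambda>x. Gm x < Fm x) (at_right 0)"
    by (intro Gmin_less_Fmin_eventually) simp
  then have "eventually (\<lambda>x. 0 \<le> u x) (at_right 0)"
    using eventually_at_right_less
    by eventually_elim (auto intro: less_imp_le usol_pos_if_Gmin_less)
  then have "0 \<le> L"
    using assms(1) trivial_limit_at_right_real by (intro tendsto_lowerbound)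
  with assms(2) show False
    by simp
qed

end

theorem lemma4p2:
  fixes u0 ub \<rho>0 \<rho>b :: "real \<Rightarrow> real" and t :: real
  assumes u0_meas: "set_borel_measurable borel {0..} u0"
      and ub_meas: "set_borel_measurable borel {0..} ub"
      and r0_meas: "set_borel_measurable borel {0..} \<rho>0"
      and rb_meas: "set_borel_measurable borel {0..} \<rho>b"
      and u0_bdd: "\<exists>B. \<forall>x\<ge>0. \<bar>u0 x\<bar> \<le> B"
      and ub_bdd: "\<exists>B. \<forall>x\<ge>0. \<bar>ub x\<bar> \<le> B"
      and ub_pos: "\<forall>x\<ge>0. ub x > 0"
      and r0_pos: "\<forall>x\<ge>0. \<rho>0 x > 0"
      and rb_pos: "\<forall>x\<ge>0. \<rho>b x > 0"
      and r0_locbdd: "\<forall>M. \<exists>B. \<forall>x\<in>{0..M}. \<rho>0 x \<le> B"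
      and rb_locbdd: "\<forall>M. \<exists>B. \<forall>x\<in>{0..M}. \<rho>b x \<le> B"
      and F_att: "\<forall>x\<ge>0. \<forall>s\<ge>0. \<exists>a b. a \<in> Fargmin u0 \<rho>0 x s \<and> b \<in> Fargmin u0 \<rho>0 x s
                    \<and> Fargmin u0 \<rho>0 x s \<subseteq> {a..b}"
      and G_att: "\<forall>x\<ge>0. \<forall>s\<ge>0. \<exists>a b. a \<in> Gargmin ub \<rho>b x s \<and> b \<in> Gargmin ub \<rho>b x s
                    \<and> Gargmin ub \<rho>b x s \<subseteq> {a..b}"
      and t_pos: "t > 0"
  shows "(Fmin u0 \<rho>0 0 t < Gmin ub \<rho>b 0 t \<longrightarrow>
            (\<exists>L. ((\<lambda>x. usol u0 \<rho>0 ub \<rho>b x t) \<longlongrightarrow> L) (at_right 0) \<and> L < 0))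
       \<and> (\<forall>L. ((\<lambda>x. usol u0 \<rho>0 ub \<rho>b x t) \<longlongrightarrow> L) (at_right 0) \<and> L < 0 \<longrightarrow>
            Fmin u0 \<rho>0 0 t \<le> Gmin ub \<rho>b 0 t)"
proof -
  interpret half_line_data u0 ub \<rho>0 \<rho>b t
    using assms by unfold_locales
  show ?thesis
  proof (intro conjI impI allI)
    assume "Fm 0 < Gm 0"
    then show "\<exists>L. (u \<longlongrightarrow> L) (at_right 0) \<and> L < 0"
      using usol_tendsto_if_Fmin_less y_up_0_pos t_pos by (intro exI[of _ "- y_up 0 / t"]) simp
  next
    fix L
    assume "(u \<longlongrightarrow> L) (at_right 0) \<and> L < 0"
    then show "Fm 0 \<le> Gm 0"
      using Fmin_le_Gmin_if_usol_limit_neg by blast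
  qed
qed

end
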